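(* Let $R$ be a Noetherian ring, let $N\subsetneq M$ be finitely generated $R$-modules, and let $X\subseteq\operatorname{Ass}(M/N)$. Then the primary decompositions of $N$ in $M$ are independent over $X$ if and only if $X$ is an open subset of $\operatorname{Ass}(M/N)$, where $\operatorname{Ass}(M/N)$ carries the subspace topology induced from the Zariski topology on $\operatorname{Spec}(R)$.
   Context: A submodule $Q\subseteq M$ is $P$-primary if $\operatorname{Ass}(M/Q)=\{P\}$. A primary decomposition of $N$ in $M$ means an irredundant and minimal primary decomposition $N=Q_1\cap\cdots\cap Q_s$ with $Q_i$ being $P_i$-primary, the $P_i$ distinct, so $\operatorname{Ass}(M/N)=\{P_1,\dots,P_s\}$; $Q_i$ is called a $P_i$-primary component of $N$ in $M$, and $\Lambda_{P}(N\subsetneq M)$ is the set of all $P$-primary components of $N$ in $M$ (over all such decompositions). Writing $X=\{P_1,\dots,P_r\}$ with $\operatorname{Ass}(M/N)=\{P_1,\dots,P_s\}$, the primary decompositions of $N$ in $M$ are called independent over $X$ if for any two primary decompositions $N=Q_1\cap\cdots\cap Q_s=Q_1'\cap\cdots\cap Q_s'$ with $Q_i,Q_i'\in\Lambda_{P_i}(N\subsetneq M)$ for all $i$, one has $Q_1\cap\cdots\cap Q_r=Q_1'\cap\cdots\cap Q_r'$. *)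

theory Defs
  imports "HOL-Analysis.Analysis"
begin

definition is_ideal :: "'a::comm_ring_1 set \<Rightarrow> bool" where
  "is_ideal I \<longleftrightarrow> 0 \<in> I \<and> (\<forall>x\<in>I. \<forall>y\<in>I. x + y \<in> I) \<and> (\<forall>r. \<forall>x\<in>I. r * x \<in> I)"

definition prime_ideal :: "'a::comm_ring_1 set \<Rightarrow> bool" where
  "prime_ideal P \<longleftrightarrow> is_ideal P \<and> 1 \<notin> P \<and> (\<forall>a b. a * b \<in> P \<longrightarrow> a \<in> P \<or> b \<in> P)"

definition noetherian_ring :: "'a::comm_ring_1 itself \<Rightarrow> bool" where
  "noetherian_ring _ \<longleftrightarrow>
     (\<forall>I::'a set. is_ideal I \<longrightarrow> (\<exists>F. finite F \<and> I = module.span ((*)) F))"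

definition zariski_topology :: "'a::comm_ring_1 set topology" where
  "zariski_topology = topology (\<lambda>U. \<exists>S. U = {P. prime_ideal P \<and> \<not> S \<subseteq> P})"

text \<open>Ass(M/N): primes of the form Ann(x + N) = (N :_R x) with x in M.\<close>

definition ass :: "('a::comm_ring_1 \<Rightarrow> 'm::ab_group_add \<Rightarrow> 'm) \<Rightarrow> 'm set \<Rightarrow> 'm set \<Rightarrow> 'a set set" where
  "ass sc M N = {P. prime_ideal P \<and> (\<exists>x\<in>M. P = {r. sc r x \<in> N})}"

definition primary_submodule ::
  "('a::comm_ring_1 \<Rightarrow> 'm::ab_group_add \<Rightarrow> 'm) \<Rightarrow> 'm set \<Rightarrow> 'a set \<Rightarrow> 'm set \<Rightarrow> bool" where
  "primary_submodule sc M P Q \<longleftrightarrow>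
     module.subspace sc Q \<and> Q \<subseteq> M \<and> ass sc M Q = {P}"

text \<open>A (minimal, irredundant) primary decomposition of N in M, indexed by the
  associated primes of M/N: one P-primary component Q P for each P in Ass(M/N)
  (so the primes are distinct and there are exactly |Ass(M/N)| components).\<close>

definition primary_decomposition ::
  "('a::comm_ring_1 \<Rightarrow> 'm::ab_group_add \<Rightarrow> 'm) \<Rightarrow> 'm set \<Rightarrow> 'm set \<Rightarrow> ('a set \<Rightarrow> 'm set) \<Rightarrow> bool" where
  "primary_decomposition sc M N Q \<longleftrightarrow>
     (\<forall>P\<in>ass sc M N. primary_submodule sc M P (Q P)) \<and>
     M \<inter> \<Inter>(Q ` ass sc M N) = N"

definition independent_over ::
  "('a::comm_ring_1 \<Rightarrow> 'm::ab_group_add \<Rightarrow> 'm) \<Rightarrow> 'm set \<Rightarrow> 'm set \<Rightarrow> 'a set set \<Rightarrow> bool" where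
  "independent_over sc M N X \<longleftrightarrow>
     (\<forall>Q Q'. primary_decomposition sc M N Q \<and> primary_decomposition sc M N Q' \<longrightarrow>
        M \<inter> \<Inter>(Q ` X) = M \<inter> \<Inter>(Q' ` X))"

end

(*
  Fix a primary decomposition N = \<Inter> Q(P), P ranging over Ass(M/N).  As Ass(M/N) is finite,
  X is open in it iff X is stable under generalization: P' \<subseteq> P \<in> X with P' \<in> Ass(M/N)
  forces P' \<in> X.

  If X is stable, prime avoidance gives for each P' \<notin> X an element of P' outside every
  prime of X; a power of it maps M into Q(P').  Hence the intersection of the Q(P) with
  P \<in> X is the set of x \<in> M with s x \<in> N for some s outside all primes of X, which does
  not depend on the decomposition.

  Conversely, let P' \<subseteq> P with P \<in> X and P' \<notin> X.  By irredundancy some y lies in every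
  Q(R), R \<noteq> P', but not in Q(P').  Then (N : y) \<subseteq> P' \<subseteq> P, so a P-primary K \<supseteq> N
  misses y, and replacing Q(P) by Q(P) \<inter> K gives a second decomposition whose X-part
  does not contain y.
*)

theory Submission
  imports Defs
begin

no_notation vector_scalar_mult (infixl "*s" 70)

section \<open>Ideals and prime avoidance\<close>

lemma ideal_add: "is_ideal I \<Longrightarrow> x \<in> I \<Longrightarrow> y \<in> I \<Longrightarrow> x + y \<in> I"
  by (simp add: is_ideal_def)

lemma ideal_mult_left: "is_ideal I \<Longrightarrow> x \<in> I \<Longrightarrow> r * x \<in> I"
  by (simp add: is_ideal_def)

lemma ideal_mult_right: "is_ideal I \<Longrightarrow> x \<in> I \<Longrightarrow> x * r \<in> I"
  by (metis ideal_mult_left mult.commute)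

lemma ideal_diff: "is_ideal I \<Longrightarrow> x \<in> I \<Longrightarrow> y \<in> I \<Longrightarrow> x - y \<in> I"
  by (metis ideal_add ideal_mult_left mult_minus1 diff_conv_add_uminus)

lemma prod_in_ideal:
  assumes "is_ideal I" "finite A" "a \<in> A" "f a \<in> I"
  shows "prod f A \<in> I"
  unfolding prod.remove[OF assms(2,3)] using ideal_mult_right[OF assms(1,4)] .

lemma prime_ideal_is_ideal: "prime_ideal P \<Longrightarrow> is_ideal P"
  by (simp add: prime_ideal_def)

lemma one_notin_prime_ideal: "prime_ideal P \<Longrightarrow> 1 \<notin> P"
  by (simp add: prime_ideal_def)

lemma prime_ideal_mult_iff: "prime_ideal P \<Longrightarrow> a * b \<in> P \<longleftrightarrow> a \<in> P \<or> b \<in> P"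
  by (auto simp: prime_ideal_def intro: ideal_mult_left ideal_mult_right)

lemma products_subset_prime_ideal_iff:
  "prime_ideal P \<Longrightarrow> {s * t |s t. s \<in> S \<and> t \<in> T} \<subseteq> P \<longleftrightarrow> S \<subseteq> P \<or> T \<subseteq> P"
  using prime_ideal_mult_iff by blast

lemma prod_notin_prime_ideal:
  assumes "prime_ideal P" "finite A" "\<forall>a\<in>A. f a \<notin> P"
  shows "prod f A \<notin> P"
  using assms(2,3) by induction (simp_all add: assms(1) one_notin_prime_ideal prime_ideal_mult_iff)

lemma power_notin_prime_ideal: "prime_ideal P \<Longrightarrow> s \<notin> P \<Longrightarrow> s ^ n \<notin> P"
  by (induction n) (simp_all add: one_notin_prime_ideal prime_ideal_mult_iff)

lemma is_ideal_Union_chain: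
  assumes "C \<noteq> {}" "\<forall>I\<in>C. is_ideal I" "chain\<^sub>\<subseteq> C"
  shows "is_ideal (\<Union>C)"
  unfolding is_ideal_def
proof (intro conjI ballI allI)
  show "0 \<in> \<Union>C" using assms(1,2) by (auto simp: is_ideal_def)
next
  fix x y assume "x \<in> \<Union>C" "y \<in> \<Union>C"
  then obtain A B where "A \<in> C" "B \<in> C" "x \<in> A" "y \<in> B" by blast
  moreover have "A \<subseteq> B \<or> B \<subseteq> A" using assms(3) \<open>A \<in> C\<close> \<open>B \<in> C\<close> by (auto simp: chain_subset_def)
  ultimately show "x + y \<in> \<Union>C" using assms(2) ideal_add by blast
next
  fix r x assume "x \<in> \<Union>C"
  then show "r * x \<in> \<Union>C" using assms(2) ideal_mult_left by blast
qed

lemma noetherian_ring_has_maximal: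
  assumes "noetherian_ring TYPE('a::comm_ring_1)" "\<F> \<noteq> {}" "\<forall>I\<in>\<F>. is_ideal (I::'a set)"
  shows "\<exists>I\<in>\<F>. \<forall>J\<in>\<F>. I \<subseteq> J \<longrightarrow> J = I"
proof (rule Zorn_Lemma2, rule ballI)
  fix C assume C: "C \<in> chains \<F>"
  show "\<exists>U\<in>\<F>. \<forall>X\<in>C. X \<subseteq> U"
  proof (cases "C = {}")
    case True
    then show ?thesis using assms(2) by auto
  next
    case False
    have "C \<subseteq> \<F>" "chain\<^sub>\<subseteq> C" using C by (auto simp: chains_def)
    then have "is_ideal (\<Union>C)" using is_ideal_Union_chain False assms(3) by blast
    then obtain G where G: "finite G" "\<Union>C = module.span (*) G"
      using assms(1) unfolding noetherian_ring_def by blast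
    have mult: "module ((*) :: 'a \<Rightarrow> 'a \<Rightarrow> 'a)"
      by unfold_locales (simp_all add: algebra_simps)
    have "G \<subseteq> \<Union>C" using G module.span_superset[OF mult] by blast
    then obtain B where B: "B \<in> C" "G \<subseteq> B"
      using finite_subset_Union_chain[OF G(1) _ False] \<open>chain\<^sub>\<subseteq> C\<close>
      by (auto simp: chain_subset_alt_def)
    have "module.subspace (*) B"
      using \<open>C \<subseteq> \<F>\<close> B(1) assms(3) by (auto simp: module.subspace_def[OF mult] is_ideal_def)
    then have "\<Union>C \<subseteq> B" using G B module.span_minimal[OF mult] by blast
    then show ?thesis using B \<open>C \<subseteq> \<F>\<close> by blast
  qed
qed

lemma add_prod_notin_primes:
  assumes fin: "finite \<P>" and primes: "\<forall>P\<in>\<P>. prime_ideal P" and P0: "P0 \<in> \<P>"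
    and x: "\<forall>P\<in>\<P>. \<forall>Q\<in>\<P>. x P \<in> Q \<longleftrightarrow> Q = P"
  shows "x P0 + prod x (\<P> - {P0}) \<notin> \<Union>\<P>"
proof
  assume "x P0 + prod x (\<P> - {P0}) \<in> \<Union>\<P>"
  then obtain Q where Q: "Q \<in> \<P>" "x P0 + prod x (\<P> - {P0}) \<in> Q" by blast
  have Q_ideal: "is_ideal Q" using Q(1) primes prime_ideal_is_ideal by blast
  show False
  proof (cases "Q = P0")
    case True
    then have "prod x (\<P> - {P0}) \<in> Q" using ideal_diff[OF Q_ideal Q(2), of "x P0"] x P0 by simp
    then show False using prod_notin_prime_ideal[of Q "\<P> - {P0}" x] fin primes x Q(1) True by auto
  next
    case False
    then have "prod x (\<P> - {P0}) \<in> Q" using prod_in_ideal[OF Q_ideal, of "\<P> - {P0}" Q x] fin x Q(1) by auto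
    then have "x P0 \<in> Q" using ideal_diff[OF Q_ideal Q(2) \<open>prod x (\<P> - {P0}) \<in> Q\<close>] by simp
    then show False using x Q(1) False P0 by blast
  qed
qed

lemma prime_avoidance:
  assumes "finite \<P>" "\<forall>P\<in>\<P>. prime_ideal P" "is_ideal I" "I \<subseteq> \<Union>\<P>"
  shows "\<exists>P\<in>\<P>. I \<subseteq> P"
  using assms
proof (induction \<P> rule: finite_psubset_induct)
  case (psubset \<P>)
  show ?case
  proof (cases "\<exists>P0\<in>\<P>. I \<subseteq> \<Union>(\<P> - {P0})")
    case True
    then obtain P0 where "P0 \<in> \<P>" "I \<subseteq> \<Union>(\<P> - {P0})" by blast
    then show ?thesis using psubset.IH[of "\<P> - {P0}"] psubset.prems by blast
  next
    case False
    then have "\<forall>P\<in>\<P>. \<exists>y. y \<in> I \<and> y \<notin> \<Union>(\<P> - {P})" by blast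
    then obtain x where x: "\<forall>P\<in>\<P>. x P \<in> I \<and> x P \<notin> \<Union>(\<P> - {P})" by metis
    then have x_in: "\<forall>P\<in>\<P>. \<forall>Q\<in>\<P>. x P \<in> Q \<longleftrightarrow> Q = P" using psubset.prems(3) by blast
    obtain P0 where P0: "P0 \<in> \<P>" using psubset.prems(2,3) by (auto simp: is_ideal_def)
    show ?thesis
    proof (cases "\<P> = {P0}")
      case True
      then show ?thesis using psubset.prems(3) by auto
    next
      case False
      then obtain P1 where P1: "P1 \<in> \<P> - {P0}" using P0 by blast
      have "prod x (\<P> - {P0}) \<in> I"
        using prod_in_ideal[OF psubset.prems(2) _ P1] psubset.hyps x P1 by simp
      then have "x P0 + prod x (\<P> - {P0}) \<in> I" using ideal_add[OF psubset.prems(2)] x P0 by blast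
      then show ?thesis
        using add_prod_notin_primes[OF psubset.hyps psubset.prems(1) P0 x_in] psubset.prems(3) by blast
    qed
  qed
qed

section \<open>Open subsets of a finite set of primes\<close>

lemma zariski_open_sets_istopology:
  "istopology (\<lambda>U. \<exists>S. U = {P. prime_ideal P \<and> \<not> S \<subseteq> (P::'a::comm_ring_1 set)})"
  unfolding istopology_def
proof (intro conjI allI impI)
  fix U V :: "'a set set"
  assume "\<exists>S. U = {P. prime_ideal P \<and> \<not> S \<subseteq> P}" "\<exists>S. V = {P. prime_ideal P \<and> \<not> S \<subseteq> P}"
  then obtain S T where "U = {P. prime_ideal P \<and> \<not> S \<subseteq> P}" "V = {P. prime_ideal P \<and> \<not> T \<subseteq> P}"
    by blast
  then have "U \<inter> V = {P. prime_ideal P \<and> \<not> {s * t |s t. s \<in> S \<and> t \<in> T} \<subseteq> P}"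
    by (auto simp: products_subset_prime_ideal_iff cong: conj_cong)
  then show "\<exists>S. U \<inter> V = {P. prime_ideal P \<and> \<not> S \<subseteq> P}" by blast
next
  fix \<K> :: "'a set set set"
  assume "\<forall>K\<in>\<K>. \<exists>S. K = {P. prime_ideal P \<and> \<not> S \<subseteq> P}"
  then have "\<forall>K\<in>\<K>. \<exists>S. \<forall>P. P \<in> K \<longleftrightarrow> prime_ideal P \<and> \<not> S \<subseteq> P" by (simp add: set_eq_iff)
  from bchoice[OF this] obtain S where "\<forall>K\<in>\<K>. \<forall>P. P \<in> K \<longleftrightarrow> prime_ideal P \<and> \<not> S K \<subseteq> P"
    by blast
  then have "\<Union>\<K> = {P. prime_ideal P \<and> \<not> \<Union>(S ` \<K>) \<subseteq> P}" by auto
  then show "\<exists>S. \<Union>\<K> = {P. prime_ideal P \<and> \<not> S \<subseteq> P}" by blast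
qed

lemma openin_zariski_topology:
  "openin zariski_topology U \<longleftrightarrow> (\<exists>S. U = {P. prime_ideal P \<and> \<not> S \<subseteq> P})"
  unfolding zariski_topology_def by (simp add: topology_inverse'[OF zariski_open_sets_istopology])

definition stable_under_generalization :: "'a set set \<Rightarrow> 'a set set \<Rightarrow> bool" where
  "stable_under_generalization A X \<longleftrightarrow> (\<forall>P\<in>X. \<forall>P'\<in>A. P' \<subseteq> P \<longrightarrow> P' \<in> X)"

lemma openin_zariski_iff_stable_under_generalization:
  assumes fin: "finite A" and primes: "\<forall>P\<in>A. prime_ideal P" and "X \<subseteq> A"
  shows "openin (subtopology zariski_topology A) X \<longleftrightarrow> stable_under_generalization A X"
proof
  assume "openin (subtopology zariski_topology A) X"
  then show "stable_under_generalization A X"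
    using primes unfolding openin_subtopology openin_zariski_topology stable_under_generalization_def
    by auto
next
  assume stable: "stable_under_generalization A X"
  have "X = {P. prime_ideal P \<and> \<not> \<Inter>(A - X) \<subseteq> P} \<inter> A"
  proof (intro equalityI subsetI)
    fix P assume P: "P \<in> X"
    have "\<forall>P'\<in>A - X. \<exists>y. y \<in> P' \<and> y \<notin> P" using stable P unfolding stable_under_generalization_def by blast
    then obtain y where y: "\<forall>P'\<in>A - X. y P' \<in> P' \<and> y P' \<notin> P" by metis
    have fin_AX: "finite (A - X)" using fin by simp
    have "prod y (A - X) \<in> \<Inter>(A - X)"
      using prod_in_ideal[OF prime_ideal_is_ideal fin_AX] primes y by blast
    moreover have "prod y (A - X) \<notin> P"
      using prod_notin_prime_ideal[OF _ fin_AX] primes y P \<open>X \<subseteq> A\<close> by blast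
    ultimately show "P \<in> {P. prime_ideal P \<and> \<not> \<Inter>(A - X) \<subseteq> P} \<inter> A" using P \<open>X \<subseteq> A\<close> primes by blast
  qed blast
  then show "openin (subtopology zariski_topology A) X"
    unfolding openin_subtopology openin_zariski_topology by blast
qed

lemma stable_under_generalization_exists_avoiding:
  assumes "finite A" "\<forall>P\<in>A. prime_ideal P" "X \<subseteq> A" "stable_under_generalization A X" "P' \<in> A - X"
  shows "\<exists>s\<in>P'. \<forall>P\<in>X. s \<notin> P"
proof (rule ccontr)
  assume "\<not> (\<exists>s\<in>P'. \<forall>P\<in>X. s \<notin> P)"
  then have "P' \<subseteq> \<Union>X" by blast
  then obtain P where "P \<in> X" "P' \<subseteq> P"
    using prime_avoidance[OF finite_subset[OF assms(3,1)]] assms(2,3,5) prime_ideal_is_ideal by blast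
  then show False using assms(4,5) unfolding stable_under_generalization_def by blast
qed

section \<open>Associated primes\<close>

abbreviation colon :: "('a::comm_ring_1 \<Rightarrow> 'm::ab_group_add \<Rightarrow> 'm) \<Rightarrow> 'm set \<Rightarrow> 'm \<Rightarrow> 'a set" where
  "colon sc Q x \<equiv> {r. sc r x \<in> Q}"

context module
begin

lemma colon_is_ideal: "subspace Q \<Longrightarrow> is_ideal (colon scale Q x)"
  unfolding is_ideal_def
  by (auto simp: subspace_0 subspace_add scale_left_distrib simp flip: scale_scale intro: subspace_scale)

lemma ass_eq_empty: "M \<subseteq> Q \<Longrightarrow> ass scale M Q = {}"
  by (auto simp: ass_def subset_iff dest!: one_notin_prime_ideal)

lemma subset_of_coefficients_and_trace:
  assumes K: "subspace K" "K \<subseteq> K'" and K': "subspace K'" "K' \<subseteq> span (insert f F)"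
    and coefficients: "colon scale (span (K' \<union> F)) f \<subseteq> colon scale (span (K \<union> F)) f"
    and trace: "K' \<inter> span F \<subseteq> K"
  shows "K' \<subseteq> K"
proof
  fix x assume x: "x \<in> K'"
  then obtain k where k: "x - k *s f \<in> span F" using K'(2) span_breakdown_eq by blast
  have "k *s f = x - (x - k *s f)" by simp
  also have "\<dots> \<in> span (K' \<union> F)"
    using x k span_diff span_mono span_superset by (metis Un_upper1 Un_upper2 subsetD)
  finally have "k *s f \<in> span (K \<union> F)" using coefficients by blast
  moreover have "span K = K" using K(1) by simp
  ultimately obtain k1 v where kv: "k1 \<in> K" "v \<in> span F" "k *s f = k1 + v" unfolding span_Un by auto
  have "x - k1 = (x - k *s f) + v" using kv(3) by (simp add: algebra_simps)
  also have "\<dots> \<in> span F" using span_add[OF k kv(2)] .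
  finally have "x - k1 \<in> K' \<inter> span F" using subspace_diff[OF K'(1) x] kv(1) K(2) by blast
  then have "x - k1 \<in> K" using trace by blast
  then show "x \<in> K" using subspace_add[OF K(1) _ kv(1)] by fastforce
qed

lemma noetherian_module_has_maximal:
  assumes noeth: "noetherian_ring TYPE('a)" and "finite F"
    and "\<K> \<noteq> {}" and "\<forall>K\<in>\<K>. subspace K \<and> K \<subseteq> span F"
  shows "\<exists>K\<in>\<K>. \<forall>K'\<in>\<K>. K \<subseteq> K' \<longrightarrow> K' = K"
  using assms(2-)
proof (induction F arbitrary: \<K> rule: finite_induct)
  case empty
  then have "\<forall>K\<in>\<K>. K = {0}" using subspace_0 by auto
  then show ?case using empty.prems(1) by auto
next
  case (insert f F)
  \<comment> \<open>maximise first the ideal of \<open>f\<close>-coefficients, then, among the maximisers, the trace on \<open>span F\<close>\<close>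
  define coefficients where "coefficients K = colon scale (span (K \<union> F)) f" for K
  have nonempty: "coefficients ` \<K> \<noteq> {}" using insert.prems(1) by simp
  have ideals: "\<forall>I\<in>coefficients ` \<K>. is_ideal I"
    unfolding coefficients_def using colon_is_ideal subspace_span by blast
  obtain I where I: "I \<in> coefficients ` \<K>" "\<forall>J\<in>coefficients ` \<K>. I \<subseteq> J \<longrightarrow> J = I"
    using noetherian_ring_has_maximal[OF noeth nonempty ideals] by blast
  define \<K>I where "\<K>I = {K\<in>\<K>. coefficients K = I}"
  have "(\<lambda>K. K \<inter> span F) ` \<K>I \<noteq> {}" using I(1) unfolding \<K>I_def by blast
  moreover have "\<forall>K\<in>(\<lambda>K. K \<inter> span F) ` \<K>I. subspace K \<and> K \<subseteq> span F"
    unfolding \<K>I_def using insert.prems(2) subspace_inter[OF _ subspace_span] by auto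
  ultimately have "\<exists>K\<in>(\<lambda>K. K \<inter> span F) ` \<K>I. \<forall>K'\<in>(\<lambda>K. K \<inter> span F) ` \<K>I. K \<subseteq> K' \<longrightarrow> K' = K"
    by (rule insert.IH)
  then obtain K1 where K1: "K1 \<in> \<K>I"
    and K1_max: "\<forall>K'\<in>\<K>I. K1 \<inter> span F \<subseteq> K' \<inter> span F \<longrightarrow> K' \<inter> span F = K1 \<inter> span F"
    by blast
  show ?case
  proof (intro bexI ballI impI)
    show "K1 \<in> \<K>" using K1 unfolding \<K>I_def by blast
    fix K' assume K': "K' \<in> \<K>" "K1 \<subseteq> K'"
    have "coefficients K1 \<subseteq> coefficients K'"
      unfolding coefficients_def using span_mono[of "K1 \<union> F" "K' \<union> F"] K'(2) by blast
    then have same_coefficients: "coefficients K' = coefficients K1" using I(2) K1 K'(1) unfolding \<K>I_def by auto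
    then have "K' \<inter> span F = K1 \<inter> span F" using K1_max K1 K' unfolding \<K>I_def by blast
    moreover have "subspace K1" "subspace K'" "K' \<subseteq> span (insert f F)"
      using insert.prems(2) K'(1) K1 unfolding \<K>I_def by auto
    ultimately have "K' \<subseteq> K1"
      using subset_of_coefficients_and_trace[of K1 K'] K'(2) same_coefficients
      unfolding coefficients_def by blast
    then show "K' = K1" using K'(2) by blast
  qed
qed

lemma exists_prime_colon:
  assumes noeth: "noetherian_ring TYPE('a)" and Q: "subspace Q" and z: "z \<notin> Q"
  shows "\<exists>r. r *s z \<notin> Q \<and> prime_ideal (colon scale Q (r *s z))"
proof -
  define \<F> where "\<F> = {colon scale Q (r *s z) | r. r *s z \<notin> Q}"
  have "\<F> \<noteq> {}" using z unfolding \<F>_def by (auto intro!: exI[of _ 1])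
  moreover have ideals: "\<forall>I\<in>\<F>. is_ideal I" unfolding \<F>_def using colon_is_ideal[OF Q] by blast
  ultimately obtain I where I: "I \<in> \<F>" "\<forall>J\<in>\<F>. I \<subseteq> J \<longrightarrow> J = I"
    using noetherian_ring_has_maximal[OF noeth] by blast
  then obtain r where r: "I = colon scale Q (r *s z)" "r *s z \<notin> Q" unfolding \<F>_def by blast
  have "prime_ideal I"
    unfolding prime_ideal_def
  proof (intro conjI allI impI)
    show "is_ideal I" using ideals I(1) by blast
    show "1 \<notin> I" using r by simp
  next
    fix a b assume ab: "a * b \<in> I"
    show "a \<in> I \<or> b \<in> I"
    proof (cases "a \<in> I")
      case False
      then have "colon scale Q ((a * r) *s z) \<in> \<F>" using r unfolding \<F>_def by (auto simp: scale_scale)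
      moreover have "I \<subseteq> colon scale Q ((a * r) *s z)"
      proof
        fix s assume "s \<in> I"
        then have "(s * r) *s z \<in> Q" using r by (simp add: scale_scale)
        then have "a *s ((s * r) *s z) \<in> Q" using subspace_scale[OF Q] by blast
        then show "s \<in> colon scale Q ((a * r) *s z)" by (simp add: scale_scale ac_simps)
      qed
      ultimately have "colon scale Q ((a * r) *s z) = I" using I(2) by blast
      moreover have "b \<in> colon scale Q ((a * r) *s z)" using ab r by (simp add: scale_scale ac_simps)
      ultimately show ?thesis by simp
    qed blast
  qed
  then show ?thesis using r by blast
qed

lemma ass_above_colon:
  assumes noeth: "noetherian_ring TYPE('a)" and "subspace M" "subspace Q" "z \<in> M" "z \<notin> Q"
  shows "\<exists>P\<in>ass scale M Q. colon scale Q z \<subseteq> P"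
proof -
  obtain r where r: "r *s z \<notin> Q" "prime_ideal (colon scale Q (r *s z))"
    using exists_prime_colon[OF noeth assms(3,5)] by blast
  have "colon scale Q (r *s z) \<in> ass scale M Q"
    using r assms(2,4) subspace_scale unfolding ass_def by blast
  moreover have "colon scale Q z \<subseteq> colon scale Q (r *s z)"
  proof
    fix s assume "s \<in> colon scale Q z"
    then have "r *s (s *s z) \<in> Q" using subspace_scale[OF assms(3)] by blast
    then show "s \<in> colon scale Q (r *s z)" by (simp add: scale_scale mult.commute)
  qed
  ultimately show ?thesis by blast
qed

lemma colon_subset_unique_ass:
  assumes "noetherian_ring TYPE('a)" "subspace M" "subspace Q" "ass scale M Q = {P}" "x \<in> M" "x \<notin> Q"
  shows "colon scale Q x \<subseteq> P"
  using ass_above_colon[OF assms(1-3,5,6)] assms(4) by blast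

lemma ass_subset_ass_Un:
  assumes "N \<subseteq> Q"
  shows "ass scale K N \<subseteq> ass scale Q N \<union> ass scale K Q"
proof
  fix P assume "P \<in> ass scale K N"
  then obtain x where P: "prime_ideal P" "x \<in> K" "P = colon scale N x" unfolding ass_def by blast
  show "P \<in> ass scale Q N \<union> ass scale K Q"
  proof (cases "x \<in> Q \<or> colon scale Q x = P")
    case True
    then show ?thesis using P unfolding ass_def by blast
  next
    case False
    \<comment> \<open>otherwise some \<open>r \<notin> P\<close> moves \<open>x\<close> into \<open>Q\<close>, and \<open>r *s x\<close> still has colon \<open>P\<close> modulo \<open>N\<close>\<close>
    then obtain r where r: "r *s x \<in> Q" "r \<notin> P" using P assms by blast
    have "colon scale N (r *s x) = P"
      using P prime_ideal_mult_iff[OF P(1)] r(2) by (auto simp: scale_scale)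
    then show ?thesis using P r unfolding ass_def by blast
  qed
qed

lemma ass_span_insert_subset:
  assumes Q: "subspace Q" and prime: "prime_ideal (colon scale Q w)"
  shows "ass scale (span (insert w Q)) Q \<subseteq> {colon scale Q w}"
proof
  fix R assume "R \<in> ass scale (span (insert w Q)) Q"
  then obtain x where R: "prime_ideal R" "x \<in> span (insert w Q)" "R = colon scale Q x"
    unfolding ass_def by blast
  then obtain t where t: "x - t *s w \<in> Q" using span_breakdown_eq span_eq_iff Q by metis
  have R_eq: "R = {s. s * t \<in> colon scale Q w}"
  proof -
    have "s *s x = s *s (x - t *s w) + (s * t) *s w" for s
      by (simp add: scale_right_diff_distrib scale_scale)
    then have "s *s x \<in> Q \<longleftrightarrow> (s * t) *s w \<in> Q" for s
      using subspace_scale[OF Q t] by (metis Q add_diff_cancel_left' subspace_add subspace_diff)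
    then show ?thesis using R(3) by simp
  qed
  have "t \<notin> colon scale Q w" using R_eq one_notin_prime_ideal[OF R(1)] by auto
  then have "R = colon scale Q w" using R_eq prime_ideal_mult_iff[OF prime] by auto
  then show "R \<in> {colon scale Q w}" by simp
qed

lemma ass_Int_subset:
  assumes A: "subspace A" and B: "subspace B"
  shows "ass scale M (A \<inter> B) \<subseteq> ass scale M A \<union> ass scale M B"
proof
  fix P assume "P \<in> ass scale M (A \<inter> B)"
  then obtain x where P: "prime_ideal P" "x \<in> M" "P = colon scale A x \<inter> colon scale B x"
    unfolding ass_def by blast
  have "colon scale A x = P \<or> colon scale B x = P"
  proof (rule ccontr)
    assume "\<not> ?thesis"
    then obtain a b where "a \<in> colon scale A x" "a \<notin> P" "b \<in> colon scale B x" "b \<notin> P"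
      using P(3) by blast
    then have "a * b \<in> P"
      using P(3) ideal_mult_right[OF colon_is_ideal[OF A]] ideal_mult_left[OF colon_is_ideal[OF B]] by blast
    then show False using prime_ideal_mult_iff[OF P(1)] \<open>a \<notin> P\<close> \<open>b \<notin> P\<close> by blast
  qed
  then show "P \<in> ass scale M A \<union> ass scale M B" using P unfolding ass_def by blast
qed

lemma ass_Inter_subset:
  assumes M: "subspace M" and fin: "finite S" and sub: "\<forall>R\<in>S. subspace (Q R)"
  shows "ass scale M (M \<inter> \<Inter>(Q ` S)) \<subseteq> (\<Union>R\<in>S. ass scale M (Q R))"
  using fin sub
proof (induction S rule: finite_induct)
  case empty
  then show ?case using ass_eq_empty[of M M] by simp
next
  case (insert R S)
  have "subspace (M \<inter> \<Inter>(Q ` S))" using M insert.prems by (intro subspace_inter subspace_Inter) auto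
  moreover have "M \<inter> \<Inter>(Q ` insert R S) = Q R \<inter> (M \<inter> \<Inter>(Q ` S))" by auto
  ultimately show ?case using ass_Int_subset[of "Q R"] insert by fastforce
qed

lemma finite_ass:
  assumes noeth: "noetherian_ring TYPE('a)" and fin: "finite F" and M: "M = span F"
    and N: "subspace N" "N \<subseteq> M"
  shows "finite (ass scale M N)"
proof -
  define \<K> where "\<K> = {K. subspace K \<and> N \<subseteq> K \<and> K \<subseteq> M \<and> finite (ass scale K N)}"
  have "N \<in> \<K>" unfolding \<K>_def using N ass_eq_empty[of N N] by auto
  then obtain K where K: "K \<in> \<K>" and K_max: "\<forall>K'\<in>\<K>. K \<subseteq> K' \<longrightarrow> K' = K"
    using noetherian_module_has_maximal[OF noeth fin, of \<K>] M unfolding \<K>_def by blast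
  have sK: "subspace K" "N \<subseteq> K" "K \<subseteq> M" "finite (ass scale K N)" using K unfolding \<K>_def by auto
  have "M \<subseteq> K"
  proof
    fix z assume z: "z \<in> M"
    show "z \<in> K"
    proof (rule ccontr)
      assume "z \<notin> K"
      then obtain r where r: "r *s z \<notin> K" "prime_ideal (colon scale K (r *s z))"
        using exists_prime_colon[OF noeth sK(1)] by blast
      have "r *s z \<in> M" using z M span_scale by blast
      define K' where "K' = span (insert (r *s z) K)"
      have K': "subspace K'" "N \<subseteq> K'" "K' \<subseteq> M" "K \<subseteq> K'" "r *s z \<in> K'"
        unfolding K'_def
        using span_superset[of "insert (r *s z) K"] span_minimal[of "insert (r *s z) K" M]
          \<open>r *s z \<in> M\<close> sK(2,3) M by auto
      have "ass scale K' N \<subseteq> ass scale K N \<union> {colon scale K (r *s z)}"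
        using ass_subset_ass_Un[OF sK(2), of K'] ass_span_insert_subset[OF sK(1) r(2)]
        unfolding K'_def by blast
      then have "finite (ass scale K' N)" using sK(4) by (simp add: finite_subset)
      then have "K' \<in> \<K>" using K' unfolding \<K>_def by blast
      then show False using K_max K' r(1) by blast
    qed
  qed
  then show ?thesis using sK by (simp add: subset_antisym)
qed

section \<open>Primary decompositions\<close>

lemma ass_subset_of_maximal_avoiding:
  assumes M: "subspace M" and K: "subspace K" "B \<subseteq> K" "K \<subseteq> M" "P \<notin> ass scale K B"
    and max: "\<forall>K'. subspace K' \<and> K \<subseteq> K' \<and> K' \<subseteq> M \<and> P \<notin> ass scale K' B \<longrightarrow> K' = K"
  shows "ass scale M K \<subseteq> {P}"
proof
  fix R assume "R \<in> ass scale M K"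
  then obtain z where z: "prime_ideal R" "z \<in> M" "R = colon scale K z" unfolding ass_def by blast
  then have "z \<notin> K" using one_notin_prime_ideal by fastforce
  define K' where "K' = span (insert z K)"
  have "subspace K'" "K \<subseteq> K'" "K' \<subseteq> M" "z \<in> K'"
    unfolding K'_def using span_superset[of "insert z K"] span_minimal[of "insert z K" M] K(3) M z(2)
    by auto
  then have "P \<in> ass scale K' B" using max \<open>z \<notin> K\<close> by blast
  then have "P \<in> ass scale K' K" using ass_subset_ass_Un[OF K(2)] K(4) by blast
  then show "R \<in> {P}" using ass_span_insert_subset[OF K(1)] z unfolding K'_def by auto
qed

lemma exists_primary_component:
  assumes noeth: "noetherian_ring TYPE('a)" and fin: "finite F" and M: "M = span F"
    and N: "subspace N" "N \<subseteq> M" and P: "P \<in> ass scale M N"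
  shows "\<exists>Q. primary_submodule scale M P Q \<and> N \<subseteq> Q \<and> P \<notin> ass scale Q N"
proof -
  define \<K> where "\<K> = {K. subspace K \<and> N \<subseteq> K \<and> K \<subseteq> M \<and> P \<notin> ass scale K N}"
  have "N \<in> \<K>" unfolding \<K>_def using N ass_eq_empty[of N N] by auto
  then obtain Q where Q: "Q \<in> \<K>" and Q_max: "\<forall>K'\<in>\<K>. Q \<subseteq> K' \<longrightarrow> K' = Q"
    using noetherian_module_has_maximal[OF noeth fin, of \<K>] M unfolding \<K>_def by blast
  have sQ: "subspace Q" "N \<subseteq> Q" "Q \<subseteq> M" "P \<notin> ass scale Q N" using Q unfolding \<K>_def by auto
  have "ass scale M Q \<subseteq> {P}"
  proof (rule ass_subset_of_maximal_avoiding[OF _ sQ])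
    show "subspace M" using M by simp
    show "\<forall>K'. subspace K' \<and> Q \<subseteq> K' \<and> K' \<subseteq> M \<and> P \<notin> ass scale K' N \<longrightarrow> K' = Q"
      using Q_max sQ(2) unfolding \<K>_def by blast
  qed
  moreover have "P \<in> ass scale M Q" using ass_subset_ass_Un[OF sQ(2), of M] P sQ(4) by blast
  ultimately show ?thesis unfolding primary_submodule_def using sQ by blast
qed

lemma primary_decomposition_exists:
  assumes noeth: "noetherian_ring TYPE('a)" and fin: "finite F" and M: "M = span F"
    and N: "subspace N" "N \<subseteq> M"
  shows "\<exists>Q. primary_decomposition scale M N Q"
proof -
  have "\<forall>P\<in>ass scale M N. \<exists>Q. primary_submodule scale M P Q \<and> N \<subseteq> Q \<and> P \<notin> ass scale Q N"
    using exists_primary_component[OF assms] by blast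
  then obtain Q where Q: "\<forall>P\<in>ass scale M N. primary_submodule scale M P (Q P) \<and> N \<subseteq> Q P \<and> P \<notin> ass scale (Q P) N"
    by metis
  define D where "D = M \<inter> \<Inter>(Q ` ass scale M N)"
  have "D \<subseteq> N"
  proof
    fix z assume z: "z \<in> D"
    show "z \<in> N"
    proof (rule ccontr)
      assume "z \<notin> N"
      have "subspace D"
        unfolding D_def using M Q by (intro subspace_inter subspace_Inter) (auto simp: primary_submodule_def)
      then obtain P where "P \<in> ass scale D N" using ass_above_colon[OF noeth _ N(1) z \<open>z \<notin> N\<close>] by blast
      then obtain w where w: "prime_ideal P" "w \<in> D" "P = colon scale N w" unfolding ass_def by blast
      then have "P \<in> ass scale M N" unfolding ass_def D_def by blast
      then have "w \<in> Q P" using w(2) unfolding D_def by blast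
      then have "P \<in> ass scale (Q P) N" using w unfolding ass_def by blast
      then show False using Q \<open>P \<in> ass scale M N\<close> by blast
    qed
  qed
  moreover have "N \<subseteq> D" unfolding D_def using N(2) Q by blast
  ultimately show ?thesis unfolding primary_decomposition_def D_def using Q by blast
qed

lemma primary_decompositionD:
  assumes "primary_decomposition scale M N Q" "P \<in> ass scale M N"
  shows "subspace (Q P)" "Q P \<subseteq> M" "ass scale M (Q P) = {P}" "N \<subseteq> Q P"
  using assms unfolding primary_decomposition_def primary_submodule_def by blast+

lemma primary_decomposition_irredundant:
  assumes M: "subspace M" and fin: "finite (ass scale M N)"
    and Q: "primary_decomposition scale M N Q" and P: "P \<in> ass scale M N"
  shows "\<exists>y\<in>M \<inter> \<Inter>(Q ` (ass scale M N - {P})). y \<notin> Q P"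
proof (rule ccontr)
  define T where "T = M \<inter> \<Inter>(Q ` (ass scale M N - {P}))"
  assume "\<not> ?thesis"
  then have "T \<subseteq> Q P" unfolding T_def by blast
  then have "T = N" using Q P primary_decompositionD(4)[OF Q] unfolding T_def primary_decomposition_def by blast
  then have "P \<in> ass scale M T" using P by simp
  moreover have "ass scale M T \<subseteq> (\<Union>R\<in>ass scale M N - {P}. ass scale M (Q R))"
    unfolding T_def using ass_Inter_subset[OF M] fin primary_decompositionD(1)[OF Q] by blast
  ultimately show False using primary_decompositionD(3)[OF Q] by auto
qed

lemma primary_power_annihilates:
  assumes noeth: "noetherian_ring TYPE('a)" and M: "subspace M" and Q: "subspace Q"
    and ass: "ass scale M Q = {P}" and p: "p \<in> P" and x: "x \<in> M"
  shows "\<exists>n. (p ^ n) *s x \<in> Q"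
proof (rule ccontr)
  assume none: "\<not> (\<exists>n. (p ^ n) *s x \<in> Q)"
  define J where "J k = colon scale Q ((p ^ k) *s x)" for k
  have step: "r *s ((p ^ Suc k) *s x) = p *s (r *s ((p ^ k) *s x))" for r k
    by (simp add: scale_scale ac_simps)
  have "range J \<noteq> {}" "\<forall>I\<in>range J. is_ideal I" unfolding J_def using colon_is_ideal[OF Q] by blast+
  from noetherian_ring_has_maximal[OF noeth this]
  obtain n where n_max: "\<forall>k. J n \<subseteq> J k \<longrightarrow> J k = J n" by auto
  have "J n \<subseteq> J (Suc n)"
  proof
    fix s assume "s \<in> J n"
    then have "p *s (s *s ((p ^ n) *s x)) \<in> Q" unfolding J_def using subspace_scale[OF Q] by blast
    then show "s \<in> J (Suc n)" unfolding J_def mem_Collect_eq step .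
  qed
  then have stable: "J (Suc n) = J n" using n_max by blast
  \<comment> \<open>the prime colon ideal of a multiple of \<open>p^n x\<close> is \<open>P \<ni> p\<close>, which the stable chain forbids\<close>
  obtain r where r: "r *s ((p ^ n) *s x) \<notin> Q" "prime_ideal (colon scale Q (r *s ((p ^ n) *s x)))"
    using exists_prime_colon[OF noeth Q] none by blast
  have "r *s ((p ^ n) *s x) \<in> M" using M x subspace_scale by blast
  then have "colon scale Q (r *s ((p ^ n) *s x)) \<in> ass scale M Q" using r(2) unfolding ass_def by blast
  then have "colon scale Q (r *s ((p ^ n) *s x)) = P" using ass by simp
  then have "p *s (r *s ((p ^ n) *s x)) \<in> Q" using p by blast
  then have "r \<in> J (Suc n)" unfolding J_def mem_Collect_eq step .
  then have "r \<in> J n" using stable by simp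
  then show False using r(1) unfolding J_def by simp
qed

lemma primary_submodule_Int:
  assumes noeth: "noetherian_ring TYPE('a)" and M: "subspace M"
    and Q: "primary_submodule scale M P Q" and K: "primary_submodule scale M P K"
  shows "primary_submodule scale M P (Q \<inter> K)"
proof -
  have sub: "subspace Q" "subspace K" "Q \<subseteq> M" "ass scale M Q = {P}" "ass scale M K = {P}"
    using Q K unfolding primary_submodule_def by blast+
  then obtain z where z: "z \<in> M" "z \<notin> K" using ass_eq_empty[of M K] by blast
  have "ass scale M (Q \<inter> K) \<noteq> {}"
    using ass_above_colon[OF noeth M subspace_inter[OF sub(1,2)] z(1)] z(2) by blast
  moreover have "ass scale M (Q \<inter> K) \<subseteq> {P}" using ass_Int_subset[OF sub(1,2)] sub(4,5) by blast
  ultimately show ?thesis unfolding primary_submodule_def using sub subspace_inter by blast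
qed

lemma primary_decomposition_refine:
  assumes noeth: "noetherian_ring TYPE('a)" and M: "subspace M"
    and Q: "primary_decomposition scale M N Q" and P: "P \<in> ass scale M N"
    and K: "primary_submodule scale M P K" "N \<subseteq> K"
  shows "primary_decomposition scale M N (Q(P := Q P \<inter> K))"
  unfolding primary_decomposition_def
proof (intro conjI ballI)
  fix R assume "R \<in> ass scale M N"
  then show "primary_submodule scale M R ((Q(P := Q P \<inter> K)) R)"
    using Q primary_submodule_Int[OF noeth M _ K(1)] P unfolding primary_decomposition_def by auto
next
  have "M \<inter> \<Inter>((Q(P := Q P \<inter> K)) ` ass scale M N) \<subseteq> M \<inter> \<Inter>(Q ` ass scale M N)"
    by (intro Int_mono order_refl INF_superset_mono) auto
  moreover have "N \<subseteq> M \<inter> \<Inter>((Q(P := Q P \<inter> K)) ` ass scale M N)"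
    using Q K(2) unfolding primary_decomposition_def by auto
  ultimately show "M \<inter> \<Inter>((Q(P := Q P \<inter> K)) ` ass scale M N) = N"
    using Q unfolding primary_decomposition_def by blast
qed

lemma exists_submodule_with_colon:
  assumes noeth: "noetherian_ring TYPE('a)" and fin: "finite F" and M: "M = span F"
    and N: "subspace N" "N \<subseteq> M" and y: "y \<in> M" and P: "prime_ideal P"
    and colon_y: "colon scale N y \<subseteq> P"
  shows "\<exists>B. subspace B \<and> N \<subseteq> B \<and> B \<subseteq> M \<and> colon scale B y = P"
proof -
  define \<K> where "\<K> = {B. subspace B \<and> N \<subseteq> B \<and> B \<subseteq> M \<and> colon scale B y \<subseteq> P}"
  have "N \<in> \<K>" unfolding \<K>_def using N colon_y by blast
  then obtain B where B: "B \<in> \<K>" and B_max: "\<forall>B'\<in>\<K>. B \<subseteq> B' \<longrightarrow> B' = B"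
    using noetherian_module_has_maximal[OF noeth fin, of \<K>] M unfolding \<K>_def by blast
  have sB: "subspace B" "N \<subseteq> B" "B \<subseteq> M" "colon scale B y \<subseteq> P" using B unfolding \<K>_def by auto
  have "P \<subseteq> colon scale B y"
  proof
    fix p assume p: "p \<in> P"
    show "p \<in> colon scale B y"
    proof (rule ccontr)
      assume p_y: "p \<notin> colon scale B y"
      have "p *s y \<in> M" using y M span_scale by blast
      define B' where "B' = span (insert (p *s y) B)"
      have B': "subspace B'" "N \<subseteq> B'" "B' \<subseteq> M" "B \<subseteq> B'" "p *s y \<in> B'"
        unfolding B'_def
        using span_superset[of "insert (p *s y) B"] span_minimal[of "insert (p *s y) B" M]
          \<open>p *s y \<in> M\<close> sB(2,3) M by auto
      have "colon scale B' y \<subseteq> P"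
      proof
        fix s assume "s \<in> colon scale B' y"
        moreover have "span B = B" using sB(1) by simp
        ultimately obtain t where "s *s y - t *s (p *s y) \<in> B"
          using span_breakdown_eq[of "s *s y"] unfolding B'_def by auto
        then have "s - t * p \<in> P" using sB(4) by (auto simp: scale_scale scale_left_diff_distrib)
        moreover have "t * p \<in> P" using ideal_mult_left[OF prime_ideal_is_ideal[OF P] p] .
        ultimately show "s \<in> P" using ideal_add[OF prime_ideal_is_ideal[OF P]] by fastforce
      qed
      then have "B' = B" using B_max B' unfolding \<K>_def by blast
      then show False using p_y B'(5) by blast
    qed
  qed
  then show ?thesis using sB by blast
qed

lemma exists_primary_avoiding:
  assumes noeth: "noetherian_ring TYPE('a)" and fin: "finite F" and M: "M = span F"
    and N: "subspace N" "N \<subseteq> M" and y: "y \<in> M" and P: "prime_ideal P"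
    and colon_y: "colon scale N y \<subseteq> P"
  shows "\<exists>K. primary_submodule scale M P K \<and> N \<subseteq> K \<and> y \<notin> K"
proof -
  obtain B where B: "subspace B" "N \<subseteq> B" "B \<subseteq> M" "colon scale B y = P"
    using exists_submodule_with_colon[OF assms] by blast
  then have "P \<in> ass scale M B" using y P unfolding ass_def by blast
  then obtain K where K: "primary_submodule scale M P K" "B \<subseteq> K" "P \<notin> ass scale K B"
    using exists_primary_component[OF noeth fin M B(1,3)] by blast
  have "y \<notin> K" using K(3) B(4) P unfolding ass_def by blast
  then show ?thesis using K B(2) by blast
qed

end

section \<open>Independence of the components over a set of primes\<close>

text \<open>The kernel of \<open>M \<rightarrow> (M/N)\<^sub>S\<close>, \<open>S\<close> the multiplicative set of elements outside every prime of \<open>X\<close>.\<close>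

definition saturation ::
  "('a::comm_ring_1 \<Rightarrow> 'm::ab_group_add \<Rightarrow> 'm) \<Rightarrow> 'm set \<Rightarrow> 'm set \<Rightarrow> 'a set set \<Rightarrow> 'm set" where
  "saturation sc M N X = {x\<in>M. \<exists>s. (\<forall>P\<in>X. s \<notin> P) \<and> sc s x \<in> N}"

context module
begin

lemma saturation_subset_components:
  assumes noeth: "noetherian_ring TYPE('a)" and M: "subspace M"
    and Q: "primary_decomposition scale M N Q" and X: "X \<subseteq> ass scale M N"
  shows "saturation scale M N X \<subseteq> M \<inter> \<Inter>(Q ` X)"
proof
  fix x assume "x \<in> saturation scale M N X"
  then obtain s where x: "x \<in> M" "\<forall>P\<in>X. s \<notin> P" "s *s x \<in> N" unfolding saturation_def by blast
  have "x \<in> Q P" if P: "P \<in> X" for P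
  proof (rule ccontr)
    assume "x \<notin> Q P"
    moreover have "P \<in> ass scale M N" using P X by blast
    moreover from this have "s \<in> colon scale (Q P) x" using x(3) primary_decompositionD(4)[OF Q] by blast
    ultimately have "s \<in> P"
      using colon_subset_unique_ass[OF noeth M] primary_decompositionD(1,3)[OF Q] x(1) by blast
    then show False using x(2) P by blast
  qed
  then show "x \<in> M \<inter> \<Inter>(Q ` X)" using x(1) by blast
qed

lemma components_subset_saturation:
  assumes noeth: "noetherian_ring TYPE('a)" and M: "subspace M" and fin: "finite (ass scale M N)"
    and Q: "primary_decomposition scale M N Q" and X: "X \<subseteq> ass scale M N"
    and stable: "stable_under_generalization (ass scale M N) X"
  shows "M \<inter> \<Inter>(Q ` X) \<subseteq> saturation scale M N X"
proof
  let ?A = "ass scale M N"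
  have primes: "\<forall>P\<in>?A. prime_ideal P" unfolding ass_def by blast
  fix x assume x: "x \<in> M \<inter> \<Inter>(Q ` X)"
  have "\<exists>t. (\<forall>P\<in>X. t \<notin> P) \<and> t *s x \<in> Q P'" if P': "P' \<in> ?A - X" for P'
  proof -
    obtain s where s: "s \<in> P'" "\<forall>P\<in>X. s \<notin> P"
      using stable_under_generalization_exists_avoiding[OF fin primes X stable P'] by blast
    obtain n where "(s ^ n) *s x \<in> Q P'"
      using primary_power_annihilates[OF noeth M primary_decompositionD(1,3)[OF Q] s(1)] P' x by blast
    moreover have "\<forall>P\<in>X. s ^ n \<notin> P" using s(2) power_notin_prime_ideal primes X by blast
    ultimately show ?thesis by blast
  qed
  then obtain t where t: "\<forall>P'\<in>?A - X. (\<forall>P\<in>X. t P' \<notin> P) \<and> t P' *s x \<in> Q P'" by metis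
  have fin_AX: "finite (?A - X)" using fin by simp
  define T where "T = prod t (?A - X)"
  have "\<forall>P\<in>X. T \<notin> P" unfolding T_def using prod_notin_prime_ideal[OF _ fin_AX] t primes X by blast
  moreover have "T *s x \<in> Q R" if R: "R \<in> ?A" for R
  proof (cases "R \<in> X")
    case True
    then show ?thesis using x primary_decompositionD(1)[OF Q R] subspace_scale by blast
  next
    case False
    then have "T = t R * prod t (?A - X - {R})" unfolding T_def using prod.remove[OF fin_AX, of R t] R by simp
    then have "T *s x = prod t (?A - X - {R}) *s (t R *s x)" by (simp add: scale_scale mult.commute)
    then show ?thesis using t R False primary_decompositionD(1)[OF Q R] subspace_scale by (metis DiffI)
  qed
  then have "T *s x \<in> N"
    using Q x M subspace_scale unfolding primary_decomposition_def by blast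
  ultimately show "x \<in> saturation scale M N X" using x unfolding saturation_def by blast
qed

lemma independent_over_if_stable:
  assumes "noetherian_ring TYPE('a)" "subspace M" "finite (ass scale M N)" "X \<subseteq> ass scale M N"
    and "stable_under_generalization (ass scale M N) X"
  shows "independent_over scale M N X"
proof -
  have eq: "M \<inter> \<Inter>(Q ` X) = saturation scale M N X" if "primary_decomposition scale M N Q" for Q
    by (rule subset_antisym[OF components_subset_saturation[OF assms(1-3) that assms(4,5)]
          saturation_subset_components[OF assms(1,2) that assms(4)]])
  show ?thesis
    unfolding independent_over_def
  proof (intro allI impI)
    fix Q Q' assume "primary_decomposition scale M N Q \<and> primary_decomposition scale M N Q'"
    then show "M \<inter> \<Inter>(Q ` X) = M \<inter> \<Inter>(Q' ` X)" using eq by simp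
  qed
qed

lemma stable_if_independent_over:
  assumes noeth: "noetherian_ring TYPE('a)" and fin: "finite F" and M: "M = span F"
    and N: "subspace N" "N \<subseteq> M" and X: "X \<subseteq> ass scale M N"
    and indep: "independent_over scale M N X"
  shows "stable_under_generalization (ass scale M N) X"
  unfolding stable_under_generalization_def
proof (intro ballI impI)
  fix P P' assume P: "P \<in> X" and P': "P' \<in> ass scale M N" "P' \<subseteq> P"
  show "P' \<in> X"
  proof (rule ccontr)
    assume "P' \<notin> X"
    have sM: "subspace M" using M by simp
    obtain Q where Q: "primary_decomposition scale M N Q"
      using primary_decomposition_exists[OF noeth fin M N] by blast
    obtain y where y: "y \<in> M \<inter> \<Inter>(Q ` (ass scale M N - {P'}))" "y \<notin> Q P'"
      using primary_decomposition_irredundant[OF sM finite_ass[OF noeth fin M N] Q P'(1)] by blast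
    have "colon scale N y \<subseteq> colon scale (Q P') y" using primary_decompositionD(4)[OF Q P'(1)] by blast
    also have "\<dots> \<subseteq> P'"
      using colon_subset_unique_ass[OF noeth sM] primary_decompositionD(1,3)[OF Q P'(1)] y by blast
    finally have "colon scale N y \<subseteq> P" using P'(2) by blast
    moreover have "prime_ideal P" using P X unfolding ass_def by blast
    moreover have "y \<in> M" using y(1) by blast
    ultimately obtain K where K: "primary_submodule scale M P K" "N \<subseteq> K" "y \<notin> K"
      using exists_primary_avoiding[OF noeth fin M N] by blast
    have "primary_decomposition scale M N (Q(P := Q P \<inter> K))"
      using primary_decomposition_refine[OF noeth sM Q _ K(1,2)] P X by blast
    then have "M \<inter> \<Inter>(Q ` X) = M \<inter> \<Inter>((Q(P := Q P \<inter> K)) ` X)"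
      using indep Q unfolding independent_over_def by blast
    moreover have "y \<in> M \<inter> \<Inter>(Q ` X)" using y X \<open>P' \<notin> X\<close> by blast
    moreover have "y \<notin> M \<inter> \<Inter>((Q(P := Q P \<inter> K)) ` X)" using P K(3) by auto
    ultimately show False by blast
  qed
qed

end

theorem theorem2p2:
  fixes sc :: "'a::comm_ring_1 \<Rightarrow> 'm::ab_group_add \<Rightarrow> 'm"
    and M N :: "'m set" and X :: "'a set set"
  assumes "module sc"
    and "noetherian_ring TYPE('a)"
    and "\<exists>F. finite F \<and> M = module.span sc F"
    and "module.subspace sc N"
    and "\<exists>F. finite F \<and> N = module.span sc F"
    and "N \<subset> M"
    and "X \<subseteq> ass sc M N"
  shows "independent_over sc M N X \<longleftrightarrow>
         openin (subtopology zariski_topology (ass sc M N)) X"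
proof -
  interpret module sc by fact
  obtain F where F: "finite F" "M = span F" using assms(3) by blast
  have M: "subspace M" using F(2) by simp
  have N: "subspace N" "N \<subseteq> M" using assms(4,6) by auto
  have fin: "finite (ass sc M N)" using finite_ass[OF assms(2) F N] .
  have "openin (subtopology zariski_topology (ass sc M N)) X \<longleftrightarrow>
      stable_under_generalization (ass sc M N) X"
    using openin_zariski_iff_stable_under_generalization[OF fin _ assms(7)]
    by (simp add: ass_def)
  also have "\<dots> \<longleftrightarrow> independent_over sc M N X"
    using independent_over_if_stable[OF assms(2) M fin assms(7)]
      stable_if_independent_over[OF assms(2) F N assms(7)] by blast
  finally show ?thesis by simp
qed

end
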